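(* Let $\mathrm{Pr}>0$, $\mathrm{Sc}>0$ with $\mathrm{Pr}\neq 1$, $\mathrm{Sc}\neq 1$, and let $\mathrm{Gr},\mathrm{Gc}\in\mathbb{R}$ and $\alpha\in\mathbb{R}$ be constants. Put $$a=-\frac{\mathrm{Gr}\cos\alpha}{\mathrm{Pr}-1},\qquad b=-\frac{\mathrm{Gc}\cos\alpha}{\mathrm{Sc}-1},\qquad \eta=\frac{Y}{2\sqrt{t}}\quad (Y\ge 0,\ t>0).$$ Consider the initial–boundary value problem for functions $V(Y,t),T(Y,t),\varphi(Y,t)$ on $Y\ge 0$: $$\frac{\partial V}{\partial t}=\mathrm{Gr}\,T\cos\alpha+\mathrm{Gc}\,\varphi\cos\alpha+\frac{\partial^2 V}{\partial Y^2},\qquad \mathrm{Pr}\frac{\partial T}{\partial t}=\frac{\partial^2 T}{\partial Y^2},\qquad \mathrm{Sc}\frac{\partial \varphi}{\partial t}=\frac{\partial^2 \varphi}{\partial Y^2},$$ with $V=T=\varphi=0$ for all $Y$ at $t\le 0$; $V=t^2$, $T=1$, $\varphi=1$ at $Y=0$ for $t>0$; and $V\to 0$, $T\to0$, $\varphi\to 0$ as $Y\to\infty$. Then the solution (obtained by the Laplace transform method) is given for $t>0$ by $$T=\operatorname{erfc}(\eta\sqrt{\mathrm{Pr}}),\qquad \varphi=\operatorname{erfc}(\eta\sqrt{\mathrm{Sc}}),$$ $$\begin{aligned}V={}&\frac{t^2}{3}\Big[(3+12\eta^2+4\eta^4)\operatorname{erfc}(\eta)-\frac{\eta}{\sqr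t{\pi}}(10+4\eta^2)e^{-\eta^2}\Big]-(a+b)\,t\Big[(1+2\eta^2)\operatorname{erfc}(\eta)-\frac{2\eta}{\sqrt{\pi}}e^{-\eta^2}\Big]\\&+a\,t\Big[(1+2\eta^2\mathrm{Pr})\operatorname{erfc}(\eta\sqrt{\mathrm{Pr}})-\frac{2\eta\sqrt{\mathrm{Pr}}}{\sqrt{\pi}}e^{-\eta^2\mathrm{Pr}}\Big]+b\,t\Big[(1+2\eta^2\mathrm{Sc})\operatorname{erfc}(\eta\sqrt{\mathrm{Sc}})-\frac{2\eta\sqrt{\mathrm{Sc}}}{\sqrt{\pi}}e^{-\eta^2\mathrm{Sc}}\Big].\end{aligned}$$
   Context: This is the nondimensional model of unsteady free-convection flow past a vertical plate inclined at angle $\alpha$, started with velocity proportional to $t^2$, with plate temperature and concentration suddenly raised: $V$ is the velocity, $T$ the temperature, $\varphi$ the concentration, $\mathrm{Gr}$ and $\mathrm{Gc}$ the thermal and mass Grashof numbers, $\mathrm{Pr}$ the Prandtl number and $\mathrm{Sc}$ the Schmidt number. $\operatorname{erfc}$ denotes the complementary error function $\operatorname{erfc}(x)=\frac{2}{\sqrt\pi}\int_x^\infty e^{-s^2}\,ds$. *)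

theory Defs
  imports "HOL-Analysis.Analysis"
begin

definition erfc :: "real \<Rightarrow> real" where
  "erfc x = 2 / sqrt pi * integral {x..} (\<lambda>s. exp (- (s\<^sup>2)))"

definition eta :: "real \<Rightarrow> real \<Rightarrow> real" where
  "eta Y t = Y / (2 * sqrt t)"

text \<open>Temperature (with parameter Pr) and concentration (same formula with Sc);
  identically zero for t \<le> 0.\<close>
definition Tsol :: "real \<Rightarrow> real \<Rightarrow> real \<Rightarrow> real" where
  "Tsol P Y t = (if t \<le> 0 then 0 else erfc (eta Y t * sqrt P))"

definition Vsol :: "real \<Rightarrow> real \<Rightarrow> real \<Rightarrow> real \<Rightarrow> real \<Rightarrow> real \<Rightarrow> real \<Rightarrow> real" where
  "Vsol Pr Sc Gr Gc \<alpha> Y t =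
    (if t \<le> 0 then 0 else
      (let a = - (Gr * cos \<alpha>) / (Pr - 1);
           b = - (Gc * cos \<alpha>) / (Sc - 1);
           e = eta Y t
       in t\<^sup>2 / 3 * ((3 + 12 * e\<^sup>2 + 4 * e ^ 4) * erfc e
                      - e / sqrt pi * (10 + 4 * e\<^sup>2) * exp (- (e\<^sup>2)))
          - (a + b) * t * ((1 + 2 * e\<^sup>2) * erfc e - 2 * e / sqrt pi * exp (- (e\<^sup>2)))
          + a * t * ((1 + 2 * e\<^sup>2 * Pr) * erfc (e * sqrt Pr)
                      - 2 * e * sqrt Pr / sqrt pi * exp (- (e\<^sup>2 * Pr)))
          + b * t * ((1 + 2 * e\<^sup>2 * Sc) * erfc (e * sqrt Sc)
                      - 2 * e * sqrt Sc / sqrt pi * exp (- (e\<^sup>2 * Sc)))))"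

definition pde_at :: "(real \<Rightarrow> real \<Rightarrow> real) \<Rightarrow> real \<Rightarrow> real \<Rightarrow> real \<Rightarrow> real \<Rightarrow> bool" where
  "pde_at F c src Y t \<longleftrightarrow>
     (\<exists>Ft FYY.
        ((\<lambda>s. F Y s) has_real_derivative Ft) (at t) \<and>
        (\<forall>\<^sub>F y in nhds Y. (\<lambda>y'. F y' t) differentiable (at y)) \<and>
        ((\<lambda>y. deriv (\<lambda>y'. F y' t) y) has_real_derivative FYY) (at Y) \<and>
        c * Ft = FYY + src)"

end

(* The three fields are superpositions of similarity solutions t^k f(m Y/(2 sqrt t)) of the
   heat equation with f = i^(2k) erfc, the repeated integral of erfc.  Its recurrence
   2n i^n erfc u = i^(n-2) erfc u - 2u i^(n-1) erfc u is exactly the ODE making t^k f(m eta)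
   solve c F_t = F_YY when c = m^2; otherwise the computation leaves the source
   (c - m^2)/4 t^(k-1) i^(2k-2) erfc(m eta).  T and phi are the cases k = 0, c = m^2.  In V
   (c = 1) the terms t i^2 erfc(eta sqrt Pr) and t i^2 erfc(eta sqrt Sc), weighted by a and b,
   produce the buoyancy sources, and the exact solutions t^2 i^4 erfc(eta) and t i^2 erfc(eta)
   fix the boundary value t^2.  The remaining conditions follow from erfc 0 = 1 and the
   Gaussian tail bound erfc x <= exp(-x^2)/(x sqrt pi). *)

theory Submission
  imports Defs "HOL-Probability.Probability" "HOL-Real_Asymp.Real_Asymp"
begin

section \<open>The complementary error function\<close>

lemma gaussian_integral:
  "integrable lborel (\<lambda>s::real. exp (- s\<^sup>2))" "(\<integral>s. exp (- s\<^sup>2) \<partial>lborel) = sqrt pi"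
proof -
  have "(\<lambda>s::real. exp (- s\<^sup>2)) = (\<lambda>s. sqrt pi * normal_density 0 (1 / sqrt 2) s)"
    by (simp add: fun_eq_iff normal_density_def power_divide real_sqrt_mult)
  then show "integrable lborel (\<lambda>s::real. exp (- s\<^sup>2))" "(\<integral>s. exp (- s\<^sup>2) \<partial>lborel) = sqrt pi"
    by simp_all
qed

lemma gaussian_set_integrable: "S \<in> sets borel \<Longrightarrow> set_integrable lborel S (\<lambda>s::real. exp (- s\<^sup>2))"
  unfolding set_integrable_def by (intro integrable_mult_indicator gaussian_integral) simp

lemma erfc_eq_set_integral: "erfc x = 2 / sqrt pi * (LINT s:{x..}|lborel. exp (- s\<^sup>2))"
  unfolding erfc_def
  using set_borel_integral_eq_integral(2)[OF gaussian_set_integrable[of "{x..}"]] by simp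

lemma erfc_0 [simp]: "erfc 0 = 1"
proof -
  have "(LINT s:{0..}|lborel. exp (- s\<^sup>2)) = sqrt pi / 2"
    unfolding set_lebesgue_integral_def
    by (rule has_bochner_integral_integral_eq[OF gaussian_moment_0])
  then show ?thesis by (simp add: erfc_eq_set_integral)
qed

lemma erfc_nonneg: "erfc x \<ge> 0"
  unfolding erfc_def
  using set_borel_integral_eq_integral(1)[OF gaussian_set_integrable[of "{x..}"]]
  by (auto intro!: integral_nonneg divide_nonneg_pos)

lemma erfc_split:
  assumes "x \<le> b"
  shows "erfc x = 2 / sqrt pi * (integral {x..b} (\<lambda>s. exp (- s\<^sup>2)) + (LINT s:{b<..}|lborel. exp (- s\<^sup>2)))"
proof -
  have "(LINT s:{x..}|lborel. exp (- s\<^sup>2)) =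
      (LINT s:{x..b}|lborel. exp (- s\<^sup>2)) + (LINT s:{b<..}|lborel. exp (- s\<^sup>2))"
  proof -
    have "{x..} = {x..b} \<union> {b<..}" using assms by auto
    then show ?thesis
      by (simp only:) (rule set_integral_Un; auto intro: gaussian_set_integrable)
  qed
  moreover have "(LINT s:{x..b}|lborel. exp (- s\<^sup>2)) = integral {x..b} (\<lambda>s. exp (- s\<^sup>2))"
    by (rule set_borel_integral_eq_integral(2)[OF gaussian_set_integrable]) auto
  ultimately show ?thesis by (simp add: erfc_eq_set_integral)
qed

lemma erfc_has_real_derivative: "(erfc has_real_derivative - 2 / sqrt pi * exp (- x\<^sup>2)) (at x)"
proof -
  let ?g = "\<lambda>s. exp (- s\<^sup>2)"
  have "((\<lambda>y. integral {y..x+1} ?g) has_real_derivative - ?g x) (at x within {x-1..x+1})"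
    by (rule integral_has_real_derivative') (auto intro!: continuous_intros)
  then have "((\<lambda>y. integral {y..x+1} ?g) has_real_derivative - ?g x) (at x)"
    by (simp add: at_within_Icc_at)
  then have "((\<lambda>y. 2 / sqrt pi * (integral {y..x+1} ?g + (LINT s:{x+1<..}|lborel. ?g s)))
      has_real_derivative - 2 / sqrt pi * exp (- x\<^sup>2)) (at x)"
    by (auto intro!: derivative_eq_intros simp: divide_simps)
  then show ?thesis
    by (rule has_field_derivative_transform_within_open[where S="{..<x+1}"])
      (auto simp: erfc_split[where b="x + 1"])
qed

declare erfc_has_real_derivative [THEN DERIV_chain2, derivative_intros]

lemma erfc_tendsto_0: "(erfc \<longlongrightarrow> 0) at_top"
proof -
  let ?g = "\<lambda>s::real. exp (- s\<^sup>2)"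
  let ?I = "\<lambda>x. \<integral>s. indicator {..x} s *\<^sub>R ?g s \<partial>lborel"
  have "erfc x = 2 / sqrt pi * (sqrt pi - ?I x)" for x
  proof -
    have "(LINT s:{x<..}|lborel. ?g s) = (\<integral>s. ?g s - indicator {..x} s *\<^sub>R ?g s \<partial>lborel)"
      unfolding set_lebesgue_integral_def
      by (intro Bochner_Integration.integral_cong) (auto split: split_indicator)
    also have "\<dots> = sqrt pi - ?I x"
      using integrable_mult_indicator[OF _ gaussian_integral(1), of "{..x}"] gaussian_integral
      by (subst Bochner_Integration.integral_diff) auto
    finally show ?thesis
      using erfc_split[of x x] by simp
  qed
  then have "erfc = (\<lambda>x. 2 / sqrt pi * (sqrt pi - ?I x))" ..
  moreover have "((\<lambda>x. 2 / sqrt pi * (sqrt pi - ?I x)) \<longlongrightarrow> 2 / sqrt pi * (sqrt pi - sqrt pi)) at_top"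
    using tendsto_integral_at_top[OF _ gaussian_integral(1)] gaussian_integral(2)
    by (intro tendsto_intros) auto
  ultimately show ?thesis by simp
qed

lemma erfc_le_gaussian_tail:
  assumes "x > 0"
  shows "erfc x \<le> exp (- x\<^sup>2) / (x * sqrt pi)"
proof -
  define g where "g y = exp (- y\<^sup>2) / y - sqrt pi * erfc y" for y
  have g_deriv: "(g has_real_derivative - exp (- y\<^sup>2) / y\<^sup>2) (at y)" if "y > 0" for y
    unfolding g_def [abs_def] using that
    by (auto intro!: derivative_eq_intros simp: field_simps power2_eq_square)
  have "g y \<le> g x" if "x \<le> y" for y
  proof (rule DERIV_nonpos_imp_nonincreasing[OF that])
    fix z assume "x \<le> z"
    with assms show "\<exists>d. (g has_real_derivative d) (at z) \<and> d \<le> 0"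
      using g_deriv[of z] by (auto intro!: divide_nonpos_pos)
  qed
  moreover have "(g \<longlongrightarrow> 0) at_top"
  proof -
    have "((\<lambda>y::real. exp (- y\<^sup>2) / y) \<longlongrightarrow> 0) at_top" by real_asymp
    then show ?thesis
      unfolding g_def [abs_def] using tendsto_diff[OF _ tendsto_mult_right_zero[OF erfc_tendsto_0]]
      by simp
  qed
  ultimately have "0 \<le> g x"
    by (intro tendsto_upperbound[of g]) (auto intro: eventually_at_top_linorderI)
  with assms show ?thesis by (simp add: g_def field_simps)
qed

lemma tendsto_erfc_combination_at_top:
  assumes "((\<lambda>u. p u * exp (- u\<^sup>2) / u) \<longlongrightarrow> 0) at_top"
    and "((\<lambda>u. q u * exp (- u\<^sup>2)) \<longlongrightarrow> 0) at_top"
  shows "((\<lambda>u. p u * erfc u - q u * exp (- u\<^sup>2) / sqrt pi) \<longlongrightarrow> 0) at_top"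
proof -
  have "((\<lambda>u. p u * erfc u) \<longlongrightarrow> 0) at_top"
  proof (rule Lim_null_comparison)
    show "\<forall>\<^sub>F u in at_top. norm (p u * erfc u) \<le> \<bar>p u * exp (- u\<^sup>2) / u\<bar> / sqrt pi"
    proof (intro eventually_at_top_linorderI[of 1] allI impI)
      fix u :: real assume "1 \<le> u"
      then have "\<bar>p u\<bar> * erfc u \<le> \<bar>p u\<bar> * (exp (- u\<^sup>2) / (u * sqrt pi))"
        by (intro mult_left_mono erfc_le_gaussian_tail) auto
      with \<open>1 \<le> u\<close> show "norm (p u * erfc u) \<le> \<bar>p u * exp (- u\<^sup>2) / u\<bar> / sqrt pi"
        by (simp add: abs_mult erfc_nonneg)
    qed
    show "((\<lambda>u. \<bar>p u * exp (- u\<^sup>2) / u\<bar> / sqrt pi) \<longlongrightarrow> 0) at_top"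
      using tendsto_divide[OF tendsto_rabs[OF assms(1)] tendsto_const[of "sqrt pi"]] by simp
  qed
  from tendsto_diff[OF this tendsto_divide[OF assms(2) tendsto_const[of "sqrt pi"]]]
  show ?thesis by simp
qed


text \<open>Closed forms of the repeated integrals of erfc,
  i^n erfc u = integral of i^(n-1) erfc over [u, infinity), with i^0 erfc = erfc.\<close>

definition ierfc :: "real \<Rightarrow> real" where
  "ierfc u = exp (- u\<^sup>2) / sqrt pi - u * erfc u"

definition i2erfc :: "real \<Rightarrow> real" where
  "i2erfc u = (1 + 2 * u\<^sup>2) / 4 * erfc u - u / 2 * exp (- u\<^sup>2) / sqrt pi"

definition i3erfc :: "real \<Rightarrow> real" where
  "i3erfc u = (1 + u\<^sup>2) / 6 * exp (- u\<^sup>2) / sqrt pi - u * (3 + 2 * u\<^sup>2) / 12 * erfc u"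

definition i4erfc :: "real \<Rightarrow> real" where
  "i4erfc u = (3 + 12 * u\<^sup>2 + 4 * u ^ 4) / 96 * erfc u
    - u * (10 + 4 * u\<^sup>2) / 96 * exp (- u\<^sup>2) / sqrt pi"

lemma iterated_erfc_has_real_derivative:
  "(ierfc has_real_derivative - erfc u) (at u)"
  "(i2erfc has_real_derivative - ierfc u) (at u)"
  "(i3erfc has_real_derivative - i2erfc u) (at u)"
  "(i4erfc has_real_derivative - i3erfc u) (at u)"
  unfolding ierfc_def [abs_def] i2erfc_def [abs_def] i3erfc_def [abs_def] i4erfc_def [abs_def]
  by (auto intro!: derivative_eq_intros simp: field_simps power2_eq_square power4_eq_xxxx
      power3_eq_cube)

lemma iterated_erfc_recurrence:
  "4 * i2erfc u = erfc u - 2 * u * ierfc u"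
  "8 * i4erfc u = i2erfc u - 2 * u * i3erfc u"
  unfolding ierfc_def i2erfc_def i3erfc_def i4erfc_def
  by (simp_all add: field_simps power2_eq_square power4_eq_xxxx)

lemma iterated_erfc_tendsto_0:
  "(i2erfc \<longlongrightarrow> 0) at_top" "(i4erfc \<longlongrightarrow> 0) at_top"
  unfolding i2erfc_def [abs_def] i4erfc_def [abs_def]
  by (rule tendsto_erfc_combination_at_top; real_asymp)+

section \<open>Similarity solutions of the heat equation\<close>

lemma eta_has_real_derivative:
  assumes "t > 0"
  shows "((\<lambda>s. eta Y s * m) has_real_derivative - (eta Y t * m) / (2 * t)) (at t)"
    and "((\<lambda>y. eta y t * m) has_real_derivative m / (2 * sqrt t)) (at y)"
  unfolding eta_def using assms by (auto intro!: derivative_eq_intros simp: field_simps)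

lemma filterlim_eta_at_top: "t > 0 \<Longrightarrow> filterlim (\<lambda>Y. eta Y t) at_top at_top"
  unfolding eta_def by real_asymp

lemma filterlim_eta_at_right_0: "Y > 0 \<Longrightarrow> filterlim (\<lambda>t. eta Y t) at_top (at_right 0)"
  unfolding eta_def by real_asymp

lemma pde_atI:
  assumes "((\<lambda>s. F Y s) has_real_derivative Ft) (at t)"
    and "\<And>y. ((\<lambda>y. F y t) has_real_derivative D y) (at y)"
    and "(D has_real_derivative FYY) (at Y)"
    and "c * Ft = FYY + src"
  shows "pde_at F c src Y t"
proof -
  have "deriv (\<lambda>y. F y t) = D"
    using assms(2) by (auto intro: DERIV_imp_deriv)
  moreover have "(\<lambda>y. F y t) differentiable (at y)" for y
    using assms(2) by (auto simp: real_differentiable_def)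
  ultimately show ?thesis
    unfolding pde_at_def using assms(1,3,4) by auto
qed

lemma pde_at_cong:
  assumes "pde_at F c src Y t" "t > 0" "\<And>y s. s > 0 \<Longrightarrow> F y s = G y s" "src = src'"
  shows "pde_at G c src' Y t"
proof -
  have "(\<lambda>y. F y t) = (\<lambda>y. G y t)"
    using assms(2,3) by auto
  moreover have "((\<lambda>s. F Y s) has_real_derivative Ft) (at t) \<longleftrightarrow>
      ((\<lambda>s. G Y s) has_real_derivative Ft) (at t)" for Ft
    using assms(2,3)
    by (intro DERIV_cong_ev refl eventually_mono[OF eventually_nhds_in_open[of "{0<..}" t]]) auto
  ultimately show ?thesis
    using assms(1,4) unfolding pde_at_def by simp
qed

lemma real_differentiable_imp_field_differentiable:
  fixes f :: "real \<Rightarrow> real"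
  shows "f differentiable (at x) \<Longrightarrow> f field_differentiable (at x)"
  by (simp add: real_differentiable_def field_differentiable_def)

lemma pde_at_add:
  assumes "pde_at F c p Y t" "pde_at G c q Y t"
  shows "pde_at (\<lambda>y s. F y s + G y s) c (p + q) Y t"
proof -
  obtain Ft FYY where F:
    "((\<lambda>s. F Y s) has_real_derivative Ft) (at t)"
    "\<forall>\<^sub>F y in nhds Y. (\<lambda>y'. F y' t) differentiable (at y)"
    "((\<lambda>y. deriv (\<lambda>y'. F y' t) y) has_real_derivative FYY) (at Y)"
    "c * Ft = FYY + p"
    using assms(1) unfolding pde_at_def by blast
  obtain Gt GYY where G:
    "((\<lambda>s. G Y s) has_real_derivative Gt) (at t)"
    "\<forall>\<^sub>F y in nhds Y. (\<lambda>y'. G y' t) differentiable (at y)"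
    "((\<lambda>y. deriv (\<lambda>y'. G y' t) y) has_real_derivative GYY) (at Y)"
    "c * Gt = GYY + q"
    using assms(2) unfolding pde_at_def by blast
  have differentiable: "\<forall>\<^sub>F y in nhds Y. (\<lambda>y'. F y' t + G y' t) differentiable (at y)"
    using F(2) G(2) by eventually_elim auto
  have deriv_eq: "\<forall>\<^sub>F y in nhds Y.
      deriv (\<lambda>y'. F y' t) y + deriv (\<lambda>y'. G y' t) y = deriv (\<lambda>y'. F y' t + G y' t) y"
    using F(2) G(2)
    by eventually_elim (intro deriv_add [symmetric] real_differentiable_imp_field_differentiable)
  have "((\<lambda>y. deriv (\<lambda>y'. F y' t + G y' t) y) has_real_derivative FYY + GYY) (at Y)"
    using DERIV_cong_ev[OF refl deriv_eq refl] DERIV_add[OF F(3) G(3)] by simp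
  moreover have "((\<lambda>s. F Y s + G Y s) has_real_derivative Ft + Gt) (at t)"
    using F(1) G(1) by (rule DERIV_add)
  moreover have "c * (Ft + Gt) = (FYY + GYY) + (p + q)"
    using F(4) G(4) by (simp add: algebra_simps)
  ultimately show ?thesis
    unfolding pde_at_def using differentiable by blast
qed

lemma pde_at_cmult:
  assumes "pde_at F c src Y t"
  shows "pde_at (\<lambda>y s. a * F y s) c (a * src) Y t"
proof -
  obtain Ft FYY where F:
    "((\<lambda>s. F Y s) has_real_derivative Ft) (at t)"
    "\<forall>\<^sub>F y in nhds Y. (\<lambda>y'. F y' t) differentiable (at y)"
    "((\<lambda>y. deriv (\<lambda>y'. F y' t) y) has_real_derivative FYY) (at Y)"
    "c * Ft = FYY + src"
    using assms unfolding pde_at_def by blast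
  have differentiable: "\<forall>\<^sub>F y in nhds Y. (\<lambda>y'. a * F y' t) differentiable (at y)"
    using F(2) by eventually_elim auto
  have deriv_eq: "\<forall>\<^sub>F y in nhds Y. a * deriv (\<lambda>y'. F y' t) y = deriv (\<lambda>y'. a * F y' t) y"
    using F(2)
    by eventually_elim (intro deriv_cmult [symmetric] real_differentiable_imp_field_differentiable)
  have "((\<lambda>y. deriv (\<lambda>y'. a * F y' t) y) has_real_derivative a * FYY) (at Y)"
    using DERIV_cong_ev[OF refl deriv_eq refl] DERIV_cmult[OF F(3), of a] by simp
  moreover have "((\<lambda>s. a * F Y s) has_real_derivative a * Ft) (at t)"
    using F(1) by (rule DERIV_cmult)
  moreover have "c * (a * Ft) = a * FYY + a * src"
    by (metis F(4) distrib_left mult.left_commute)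
  ultimately show ?thesis
    unfolding pde_at_def using differentiable by blast
qed

lemma pde_at_similarity:
  fixes f g h :: "real \<Rightarrow> real" and k :: nat
  assumes f: "\<And>u. (f has_real_derivative - g u) (at u)"
    and g: "\<And>u. (g has_real_derivative - h u) (at u)"
    and recurrence: "\<And>u. 4 * k * f u = h u - 2 * u * g u"
    and t: "t > 0"
  shows "pde_at (\<lambda>y s. s ^ k * f (eta y s * m)) c
    ((c - m\<^sup>2) / 4 * t ^ k / t * h (eta Y t * m)) Y t"
proof -
  define u where "u = eta Y t * m"
  have "((\<lambda>s. s ^ k * f (eta Y s * m)) has_real_derivative
      real k * t ^ (k - 1) * f u + t ^ k * (- g u * (- u / (2 * t)))) (at t)"
    unfolding u_def
    by (rule DERIV_cong[OF DERIV_mult[OF DERIV_pow DERIV_chain2[OF f eta_has_real_derivative(1)[OF t]]]])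
      simp
  moreover have "((\<lambda>y. t ^ k * f (eta y t * m)) has_real_derivative
      t ^ k * (- g (eta y t * m) * (m / (2 * sqrt t)))) (at y)" for y
    by (intro DERIV_cmult DERIV_chain2[OF f] eta_has_real_derivative t)
  moreover have "((\<lambda>y. t ^ k * (- g (eta y t * m) * (m / (2 * sqrt t)))) has_real_derivative
      t ^ k * h u * (m / (2 * sqrt t))\<^sup>2) (at Y)"
    unfolding u_def
    by (rule DERIV_cong[OF DERIV_cmult[OF DERIV_cmult_right[OF DERIV_minus[OF
          DERIV_chain2[OF g eta_has_real_derivative(2)[OF t]]]]]])
      (simp add: power2_eq_square)
  moreover have "c * (real k * t ^ (k - 1) * f u + t ^ k * (- g u * (- u / (2 * t)))) =
      t ^ k * h u * (m / (2 * sqrt t))\<^sup>2 + (c - m\<^sup>2) / 4 * t ^ k / t * h u"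
  proof -
    have square: "(m / (2 * sqrt t))\<^sup>2 = m\<^sup>2 / (4 * t)"
      using t by (simp add: power_divide power_mult_distrib)
    have power: "real k * t ^ (k - 1) = real k * t ^ k / t"
      using t by (cases k) auto
    have "h u = 4 * k * f u + 2 * u * g u"
      using recurrence[of u] by simp
    then show ?thesis
      unfolding square power using t by (simp add: field_simps)
  qed
  ultimately show ?thesis
    unfolding u_def by (rule pde_atI)
qed

section \<open>Temperature, concentration and velocity\<close>

lemma Tsol_pde:
  assumes "P > 0" "t > 0"
  shows "pde_at (Tsol P) P 0 Y t"
proof -
  \<comment> \<open>the case k = 0: erfc, -erfc' and erfc'' take the roles of f, g and h\<close>
  have "pde_at (\<lambda>y s. s ^ 0 * erfc (eta y s * sqrt P)) P
      ((P - (sqrt P)\<^sup>2) / 4 * t ^ 0 / t * (4 * (eta Y t * sqrt P) / sqrt pi * exp (- (eta Y t * sqrt P)\<^sup>2))) Y t"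
    by (rule pde_at_similarity[where g = "\<lambda>u. 2 / sqrt pi * exp (- u\<^sup>2)"])
      (use \<open>t > 0\<close> in \<open>auto intro!: derivative_eq_intros simp: divide_simps\<close>)
  then show ?thesis
    by (rule pde_at_cong) (use assms in \<open>simp_all add: Tsol_def\<close>)
qed

lemma Vsol_eq_similarity_sum:
  fixes Pr Sc Gr Gc \<alpha> t :: real
  assumes "Pr > 0" "Sc > 0" "t > 0"
  defines "a \<equiv> - (Gr * cos \<alpha>) / (Pr - 1)" and "b \<equiv> - (Gc * cos \<alpha>) / (Sc - 1)"
  shows "Vsol Pr Sc Gr Gc \<alpha> Y t =
      32 * (t\<^sup>2 * i4erfc (eta Y t)) - 4 * (a + b) * (t * i2erfc (eta Y t))
      + 4 * a * (t * i2erfc (eta Y t * sqrt Pr)) + 4 * b * (t * i2erfc (eta Y t * sqrt Sc))"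
proof -
  define e where "e = eta Y t"
  have i4: "(3 + 12 * e\<^sup>2 + 4 * e ^ 4) * erfc e - e / sqrt pi * (10 + 4 * e\<^sup>2) * exp (- e\<^sup>2)
      = 96 * i4erfc e"
    by (simp add: i4erfc_def field_simps)
  have i2: "(1 + 2 * e\<^sup>2) * erfc e - 2 * e / sqrt pi * exp (- e\<^sup>2) = 4 * i2erfc e"
    by (simp add: i2erfc_def field_simps)
  have i2_scaled: "(1 + 2 * e\<^sup>2 * P) * erfc (e * sqrt P) - 2 * e * sqrt P / sqrt pi * exp (- (e\<^sup>2 * P))
      = 4 * i2erfc (e * sqrt P)" if "P \<ge> 0" for P
    using that by (simp add: i2erfc_def power_mult_distrib field_simps)
  have "Vsol Pr Sc Gr Gc \<alpha> Y t =
      t\<^sup>2 / 3 * ((3 + 12 * e\<^sup>2 + 4 * e ^ 4) * erfc e - e / sqrt pi * (10 + 4 * e\<^sup>2) * exp (- e\<^sup>2))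
      - (a + b) * t * ((1 + 2 * e\<^sup>2) * erfc e - 2 * e / sqrt pi * exp (- e\<^sup>2))
      + a * t * ((1 + 2 * e\<^sup>2 * Pr) * erfc (e * sqrt Pr)
                  - 2 * e * sqrt Pr / sqrt pi * exp (- (e\<^sup>2 * Pr)))
      + b * t * ((1 + 2 * e\<^sup>2 * Sc) * erfc (e * sqrt Sc)
                  - 2 * e * sqrt Sc / sqrt pi * exp (- (e\<^sup>2 * Sc)))"
    using assms(3) unfolding Vsol_def Let_def a_def b_def e_def by simp
  also have "\<dots> = 32 * (t\<^sup>2 * i4erfc e) - 4 * (a + b) * (t * i2erfc e)
      + 4 * a * (t * i2erfc (e * sqrt Pr)) + 4 * b * (t * i2erfc (e * sqrt Sc))"
    unfolding i4 i2 i2_scaled[OF less_imp_le[OF assms(1)]] i2_scaled[OF less_imp_le[OF assms(2)]]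
    by simp
  finally show ?thesis
    unfolding e_def .
qed

lemma Vsol_pde:
  assumes Pr: "Pr > 0" "Pr \<noteq> 1" and Sc: "Sc > 0" "Sc \<noteq> 1" and t: "t > 0"
  shows "pde_at (Vsol Pr Sc Gr Gc \<alpha>) 1 (Gr * Tsol Pr Y t * cos \<alpha> + Gc * Tsol Sc Y t * cos \<alpha>) Y t"
proof -
  define a where "a = - (Gr * cos \<alpha>) / (Pr - 1)"
  define b where "b = - (Gc * cos \<alpha>) / (Sc - 1)"
  have i4: "pde_at (\<lambda>y s. s ^ 2 * i4erfc (eta y s * 1)) 1
      ((1 - 1\<^sup>2) / 4 * t ^ 2 / t * i2erfc (eta Y t * 1)) Y t"
    by (rule pde_at_similarity) (use iterated_erfc_has_real_derivative iterated_erfc_recurrence t in auto)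
  have i2: "pde_at (\<lambda>y s. s ^ 1 * i2erfc (eta y s * m)) 1
      ((1 - m\<^sup>2) / 4 * t ^ 1 / t * erfc (eta Y t * m)) Y t" for m
    by (rule pde_at_similarity) (use iterated_erfc_has_real_derivative iterated_erfc_recurrence t in auto)
  have coefficients: "a * ((1 - Pr) * x) = Gr * x * cos \<alpha>" "b * ((1 - Sc) * x) = Gc * x * cos \<alpha>" for x
    using Pr Sc by (simp_all add: a_def b_def field_simps)
  note combination = pde_at_add[OF pde_at_add[OF pde_at_add[OF
      pde_at_cmult[OF i4, of 32] pde_at_cmult[OF i2[of 1], of "- 4 * (a + b)"]]
      pde_at_cmult[OF i2[of "sqrt Pr"], of "4 * a"]] pde_at_cmult[OF i2[of "sqrt Sc"], of "4 * b"]]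
  show ?thesis
    apply (rule pde_at_cong[OF combination t])
    subgoal for y s
      using Pr(1) Sc(1) by (simp add: Vsol_eq_similarity_sum a_def b_def algebra_simps)
    subgoal
      using t Pr(1) Sc(1) by (simp add: Tsol_def coefficients)
    done
qed

lemma Tsol_tendsto_0:
  assumes eta: "filterlim (\<lambda>x. eta (Y x) (t x)) at_top F"
    and pos: "\<forall>\<^sub>F x in F. t x > 0" and "P > 0"
  shows "((\<lambda>x. Tsol P (Y x) (t x)) \<longlongrightarrow> 0) F"
proof -
  have "((\<lambda>x. erfc (eta (Y x) (t x) * sqrt P)) \<longlongrightarrow> 0) F"
    using \<open>P > 0\<close>
    by (intro filterlim_compose[OF erfc_tendsto_0 filterlim_at_top_mult_tendsto_pos[OF tendsto_const _ eta]])
      simp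
  moreover have "\<forall>\<^sub>F x in F. erfc (eta (Y x) (t x) * sqrt P) = Tsol P (Y x) (t x)"
    using pos by eventually_elim (simp add: Tsol_def)
  ultimately show ?thesis
    by (rule Lim_transform_eventually)
qed

lemma Vsol_tendsto_0:
  assumes eta: "filterlim (\<lambda>x. eta (Y x) (t x)) at_top F"
    and t: "(t \<longlongrightarrow> t0) F" and pos: "\<forall>\<^sub>F x in F. t x > 0" and "Pr > 0" "Sc > 0"
  shows "((\<lambda>x. Vsol Pr Sc Gr Gc \<alpha> (Y x) (t x)) \<longlongrightarrow> 0) F"
proof -
  define a where "a = - (Gr * cos \<alpha>) / (Pr - 1)"
  define b where "b = - (Gc * cos \<alpha>) / (Sc - 1)"
  have profile: "((\<lambda>x. g (eta (Y x) (t x) * m)) \<longlongrightarrow> 0) F" if "(g \<longlongrightarrow> 0) at_top" "m > 0" for g m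
    by (rule filterlim_compose[OF that(1) filterlim_at_top_mult_tendsto_pos[OF tendsto_const that(2) eta]])
  have "((\<lambda>x. 32 * ((t x)\<^sup>2 * i4erfc (eta (Y x) (t x))) - 4 * (a + b) * (t x * i2erfc (eta (Y x) (t x)))
      + 4 * a * (t x * i2erfc (eta (Y x) (t x) * sqrt Pr))
      + 4 * b * (t x * i2erfc (eta (Y x) (t x) * sqrt Sc)))
    \<longlongrightarrow> 32 * (t0\<^sup>2 * 0) - 4 * (a + b) * (t0 * 0) + 4 * a * (t0 * 0) + 4 * b * (t0 * 0)) F"
    using profile[of _ 1] \<open>Pr > 0\<close> \<open>Sc > 0\<close>
    by (intro tendsto_intros t profile iterated_erfc_tendsto_0) (auto intro: iterated_erfc_tendsto_0)
  moreover have "\<forall>\<^sub>F x in F. 32 * ((t x)\<^sup>2 * i4erfc (eta (Y x) (t x)))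
      - 4 * (a + b) * (t x * i2erfc (eta (Y x) (t x)))
      + 4 * a * (t x * i2erfc (eta (Y x) (t x) * sqrt Pr))
      + 4 * b * (t x * i2erfc (eta (Y x) (t x) * sqrt Sc)) = Vsol Pr Sc Gr Gc \<alpha> (Y x) (t x)"
    using pos by eventually_elim (simp add: Vsol_eq_similarity_sum assms a_def b_def)
  ultimately show ?thesis
    by (simp add: Lim_transform_eventually)
qed

theorem mainTheorem1:
  fixes Pr Sc Gr Gc \<alpha> :: real
  assumes "Pr > 0" "Sc > 0" "Pr \<noteq> 1" "Sc \<noteq> 1"
  defines "T \<equiv> Tsol Pr" and "\<phi> \<equiv> Tsol Sc" and "V \<equiv> Vsol Pr Sc Gr Gc \<alpha>"
  shows
    \<comment> \<open>the field equations for Y > 0, t > 0\<close>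
    "(\<forall>Y>0. \<forall>t>0.
        pde_at V 1 (Gr * T Y t * cos \<alpha> + Gc * \<phi> Y t * cos \<alpha>) Y t \<and>
        pde_at T Pr 0 Y t \<and>
        pde_at \<phi> Sc 0 Y t)
     \<comment> \<open>initial conditions\<close>
     \<and> (\<forall>Y\<ge>0. \<forall>t\<le>0. V Y t = 0 \<and> T Y t = 0 \<and> \<phi> Y t = 0)
     \<and> (\<forall>Y>0. ((\<lambda>t. V Y t) \<longlongrightarrow> 0) (at_right 0) \<and>
              ((\<lambda>t. T Y t) \<longlongrightarrow> 0) (at_right 0) \<and>
              ((\<lambda>t. \<phi> Y t) \<longlongrightarrow> 0) (at_right 0))
     \<comment> \<open>boundary conditions at Y = 0\<close>
     \<and> (\<forall>t>0. V 0 t = t\<^sup>2 \<and> T 0 t = 1 \<and> \<phi> 0 t = 1)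
     \<comment> \<open>decay as Y tends to infinity\<close>
     \<and> (\<forall>t>0. ((\<lambda>Y. V Y t) \<longlongrightarrow> 0) at_top \<and>
              ((\<lambda>Y. T Y t) \<longlongrightarrow> 0) at_top \<and>
              ((\<lambda>Y. \<phi> Y t) \<longlongrightarrow> 0) at_top)
     \<comment> \<open>the explicit formulas for t > 0\<close>
     \<and> (\<forall>Y\<ge>0. \<forall>t>0. T Y t = erfc (eta Y t * sqrt Pr) \<and> \<phi> Y t = erfc (eta Y t * sqrt Sc))"
  unfolding T_def \<phi>_def V_def
proof (intro conjI allI impI)
  fix Y t :: real
  assume "Y > 0" "t > 0"
  then show "pde_at (Vsol Pr Sc Gr Gc \<alpha>) 1 (Gr * Tsol Pr Y t * cos \<alpha> + Gc * Tsol Sc Y t * cos \<alpha>) Y t"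
    "pde_at (Tsol Pr) Pr 0 Y t" "pde_at (Tsol Sc) Sc 0 Y t"
    using assms by (simp_all add: Vsol_pde Tsol_pde)
next
  fix Y :: real
  assume "Y > 0"
  note at_right_0 = filterlim_eta_at_right_0[OF this] tendsto_ident_at eventually_at_right_less
  show "((\<lambda>t. Vsol Pr Sc Gr Gc \<alpha> Y t) \<longlongrightarrow> 0) (at_right 0)"
    using Vsol_tendsto_0[OF at_right_0 assms(1,2)] .
  show "((\<lambda>t. Tsol Pr Y t) \<longlongrightarrow> 0) (at_right 0)" "((\<lambda>t. Tsol Sc Y t) \<longlongrightarrow> 0) (at_right 0)"
    using Tsol_tendsto_0[OF at_right_0(1,3)] assms(1,2) by auto
next
  fix t :: real
  assume "t > 0"
  note at_top = filterlim_eta_at_top[OF this] tendsto_const always_eventually[of "\<lambda>_. t > 0"]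
  show "((\<lambda>Y. Vsol Pr Sc Gr Gc \<alpha> Y t) \<longlongrightarrow> 0) at_top"
    using Vsol_tendsto_0[OF at_top assms(1,2)] \<open>t > 0\<close> by simp
  show "((\<lambda>Y. Tsol Pr Y t) \<longlongrightarrow> 0) at_top" "((\<lambda>Y. Tsol Sc Y t) \<longlongrightarrow> 0) at_top"
    using Tsol_tendsto_0[OF at_top(1,3)] assms(1,2) \<open>t > 0\<close> by auto
  show "Vsol Pr Sc Gr Gc \<alpha> 0 t = t\<^sup>2"
    using \<open>t > 0\<close> by (simp add: Vsol_def Let_def eta_def algebra_simps)
  show "Tsol Pr 0 t = 1" "Tsol Sc 0 t = 1"
    using \<open>t > 0\<close> by (simp_all add: Tsol_def eta_def)
qed (simp_all add: Vsol_def Tsol_def)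

end
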